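(* Suppose $\gcd(\alpha,|\langle\Theta\rangle|)=1$, and let $\mathcal{C}$ be an $\mathbb{F}_q\mathcal{R}$-skew cyclic code of length $(\alpha,\beta)$ generated as a left $\mathcal{R}[x;\theta]$-submodule of $R_{\alpha,\beta}$ by $(f(x),0)$ and $(0,g(x))$, with $f(x)\in\mathbb{F}_q[x;\Theta]/\langle x^\alpha-1\rangle$ and $g(x)\in\mathcal{R}[x;\theta]/\langle x^\beta-1\rangle$. Then $\mathcal{C}=\mathcal{C}'\otimes\mathscr{C}$, where $\mathcal{C}'$ is a cyclic code of length $\alpha$ over $\mathbb{F}_q$ and $\mathscr{C}$ is a skew cyclic code of length $\beta$ over $\mathcal{R}$.
   Context: Let $p$ be a prime, $q=p^m$, $\mathcal{R}=\mathbb{F}_q[u]/\langle u^2-u\rangle$. Fix $i$; $\Theta(a)=a^{p^i}$ on $\mathbb{F}_q$ and $\theta(a+ub)=a^{p^i}+ub^{p^i}$ on $\mathcal{R}$; $\eta(a+ub)=a$; $|\langle\Theta\rangle|$ denotes the order of $\Theta$. $\mathbb{F}_q[x;\Theta]$, $\mathcal{R}[x;\theta]$ are skew polynomial rings with multiplication determined by $(ax^i)(bx^j)=a\Theta^i(b)x^{i+j}$ (resp. with $\theta$). $R_{\alpha,\beta}=\mathbb{F}_q[x;\Theta]/\langle x^\alpha-1\rangle\times\mathcal{R}[x;\theta]/\langle x^\beta-1\rangle$, identified with $\mathbb{F}_q^\alpha\times\mathcal{R}^\beta$ via coefficient vectors, is a left $\mathcal{R}[x;\theta]$-module via $r(x)*(k(x),t(x))=(\eta(r(x))k(x),r(x)t(x))$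 ($\eta$ coefficientwise, reduction modulo $x^\alpha-1$, $x^\beta-1$). An $\mathbb{F}_q\mathcal{R}$-skew cyclic code of length $(\alpha,\beta)$ is an $\mathcal{R}$-submodule of $\mathbb{F}_q^\alpha\times\mathcal{R}^\beta$ (with $s*(x,y)=(\eta(s)x,sy)$ componentwise) closed under $\sigma(x_0,\dots,x_{\alpha-1},y_0,\dots,y_{\beta-1})=(\Theta(x_{\alpha-1}),\Theta(x_0),\dots,\Theta(x_{\alpha-2}),\theta(y_{\beta-1}),\theta(y_0),\dots,\theta(y_{\beta-2}))$. A skew cyclic code of length $n$ over $\mathcal{R}$ is an $\mathcal{R}$-submodule of $\mathcal{R}^n$ closed under $(c_0,\dots,c_{n-1})\mapsto(\theta(c_{n-1}),\theta(c_0),\dots,\theta(c_{n-2}))$. For $A\subseteq\mathbb{F}_q^\alpha$, $B\subseteq\mathcal{R}^\beta$, $A\otimes B=\{(a,b):a\in A,b\in B\}$. *)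

theory Defs
  imports Main "HOL-Library.Product_Plus" "HOL-Computational_Algebra.Primes"
begin

(* Elements of R = F_q[u]/<u^2-u> are pairs (a,b) standing for a + u b;
   addition is componentwise (Product_Plus), multiplication below. *)

definition Rmul :: "'a::comm_ring \<times> 'a \<Rightarrow> 'a \<times> 'a \<Rightarrow> 'a \<times> 'a" where
  "Rmul x y = (fst x * fst y, fst x * snd y + snd x * fst y + snd x * snd y)"

definition Theta :: "nat \<Rightarrow> nat \<Rightarrow> 'a::field \<Rightarrow> 'a" where
  "Theta p i a = a ^ (p ^ i)"

definition thetaR :: "nat \<Rightarrow> nat \<Rightarrow> 'a::field \<times> 'a \<Rightarrow> 'a \<times> 'a" where
  "thetaR p i x = (Theta p i (fst x), Theta p i (snd x))"

definition eta :: "'a \<times> 'a \<Rightarrow> 'a" where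
  "eta x = fst x"

definition Theta_ord :: "'a::field itself \<Rightarrow> nat \<Rightarrow> nat \<Rightarrow> nat" where
  "Theta_ord T p i = (LEAST k. 0 < k \<and> (\<forall>a::'a. (Theta p i ^^ k) a = a))"

(* Vectors = coefficient lists. Componentwise addition of vectors. *)
definition vadd :: "'b::plus list \<Rightarrow> 'b list \<Rightarrow> 'b list" where
  "vadd xs ys = map2 (+) xs ys"

(* Action of the skew polynomial r(x) = sum_s r!s x^s in R[x;theta] on
   F_q[x;Theta]/<x^alpha - 1>:  eta(r(x)) k(x)  reduced mod x^alpha - 1,
   using (a x^s)(b x^j) = a Theta^s(b) x^(s+j) and x^n = 1. *)
definition act1 :: "nat \<Rightarrow> nat \<Rightarrow> ('a::field \<times> 'a) list \<Rightarrow> 'a list \<Rightarrow> 'a list" where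
  "act1 p i r k = map (\<lambda>l. \<Sum>s<length r. \<Sum>j<length k.
       if (s + j) mod length k = l then eta (r ! s) * (Theta p i ^^ s) (k ! j) else 0)
     [0..<length k]"

(* Action of r(x) in R[x;theta] on R[x;theta]/<x^beta - 1> by left multiplication. *)
definition act2 :: "nat \<Rightarrow> nat \<Rightarrow> ('a::field \<times> 'a) list \<Rightarrow> ('a \<times> 'a) list \<Rightarrow> ('a \<times> 'a) list" where
  "act2 p i r t = map (\<lambda>l. \<Sum>s<length r. \<Sum>j<length t.
       if (s + j) mod length t = l then Rmul (r ! s) ((thetaR p i ^^ s) (t ! j)) else 0)
     [0..<length t]"

definition mod_act :: "nat \<Rightarrow> nat \<Rightarrow> ('a::field \<times> 'a) list \<Rightarrow> 'a list \<times> ('a \<times> 'a) list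
    \<Rightarrow> 'a list \<times> ('a \<times> 'a) list" where
  "mod_act p i r v = (act1 p i r (fst v), act2 p i r (snd v))"

definition padd :: "'a::field list \<times> ('a \<times> 'a) list \<Rightarrow> 'a list \<times> ('a \<times> 'a) list
    \<Rightarrow> 'a list \<times> ('a \<times> 'a) list" where
  "padd v w = (vadd (fst v) (fst w), vadd (snd v) (snd w))"

definition gen_code :: "nat \<Rightarrow> nat \<Rightarrow> nat \<Rightarrow> nat \<Rightarrow> 'a::field list \<Rightarrow> ('a \<times> 'a) list
    \<Rightarrow> ('a list \<times> ('a \<times> 'a) list) set" where
  "gen_code p i \<alpha> \<beta> f g =
     {padd (mod_act p i r1 (f, replicate \<beta> 0)) (mod_act p i r2 (replicate \<alpha> 0, g)) | r1 r2. True}"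

definition cshift :: "'b list \<Rightarrow> 'b list" where
  "cshift xs = (if xs = [] then [] else last xs # butlast xs)"

definition cyclic_code :: "nat \<Rightarrow> 'a::field list set \<Rightarrow> bool" where
  "cyclic_code n D \<longleftrightarrow>
     D \<subseteq> {xs. length xs = n} \<and> replicate n 0 \<in> D \<and>
     (\<forall>x\<in>D. \<forall>y\<in>D. vadd x y \<in> D) \<and>
     (\<forall>c. \<forall>x\<in>D. map (\<lambda>a. c * a) x \<in> D) \<and>
     (\<forall>x\<in>D. cshift x \<in> D)"

definition skew_cyclic_code_R :: "nat \<Rightarrow> nat \<Rightarrow> nat \<Rightarrow> ('a::field \<times> 'a) list set \<Rightarrow> bool" where
  "skew_cyclic_code_R p i n D \<longleftrightarrow>
     D \<subseteq> {xs. length xs = n} \<and> replicate n 0 \<in> D \<and>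
     (\<forall>x\<in>D. \<forall>y\<in>D. vadd x y \<in> D) \<and>
     (\<forall>c. \<forall>x\<in>D. map (Rmul c) x \<in> D) \<and>
     (\<forall>x\<in>D. map (thetaR p i) (cshift x) \<in> D)"

end

theory Submission
  imports Defs "HOL-Number_Theory.Residues" "HOL-Combinatorics.Cycles"
begin

(* Since r * (f, 0) + r' * (0, g) = (eta(r) f, r' g), the code is the product of the orbit
   of f under the first action and the orbit of g under the second.  The theta-twisted shift
   is left multiplication by x, and x (r g) = (x r) g, so the orbit of g is a skew cyclic code.
   On the first component x acts through Theta and only yields a twisted shift; but x^S with
   Theta^S = id and S = 1 (mod alpha) acts as the plain cyclic shift, and such an S exists
   because gcd(alpha, |<Theta>|) = 1. *)

lemma sum_lessThan_add:
  "(\<Sum>t<m + n. F t) = (\<Sum>t<m. F t) + (\<Sum>u<n. F (m + u))" for F :: "nat \<Rightarrow> 'b::comm_monoid_add"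
  by (induction n) (simp_all add: add.assoc)

lemma vadd_replicate_zero_left:
  "length xs = n \<Longrightarrow> vadd (replicate n 0) xs = (xs :: 'b::monoid_add list)"
  by (auto simp: vadd_def intro!: nth_equalityI)

lemma vadd_replicate_zero_right:
  "length xs = n \<Longrightarrow> vadd xs (replicate n 0) = (xs :: 'b::monoid_add list)"
  by (auto simp: vadd_def intro!: nth_equalityI)

lemma length_cshift [simp]: "length (cshift xs) = length xs"
  by (simp add: cshift_def)

lemma cshift_nth:
  assumes "l < length xs"
  shows "cshift xs ! l = xs ! ((length xs - 1 + l) mod length xs)"
proof (cases l)
  case 0
  then show ?thesis
    using assms by (simp add: cshift_def last_conv_nth)
next
  case (Suc l')
  moreover have "length xs - 1 + l = l' + length xs" and "xs \<noteq> []"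
    using assms Suc by auto
  ultimately show ?thesis
    using assms by (simp add: cshift_def nth_butlast)
qed

lemma mod_eq_pred_iff:
  fixes S t l n :: nat
  assumes "l < n" and "[S = 1] (mod n)"
  shows "t mod n = (n - 1 + l) mod n \<longleftrightarrow> (S + t) mod n = l"
proof -
  have "[S + (n - 1 + l) = 1 + (n - 1 + l)] (mod n)"
    using assms(2) by (rule cong_add_rcancel_nat[THEN iffD2])
  also have "1 + (n - 1 + l) = l + n"
    using assms(1) by simp
  also have "[l + n = l] (mod n)"
    by (simp add: cong_def)
  finally have "[S + (n - 1 + l) = l] (mod n)" .
  then have "[t = n - 1 + l] (mod n) \<longleftrightarrow> [S + t = l] (mod n)"
    by (meson cong_add_lcancel_nat cong_sym cong_trans)
  then show ?thesis
    using assms(1) by (simp add: cong_def)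
qed

(* r(x) k(x) reduced modulo x^n - 1 (n = length k) in a skew polynomial ring with
   x a = sigma(a) x; mul multiplies a coefficient of r into one of k, so that act1
   (mul a b = eta a * b) and act2 (mul = Rmul) are both instances. *)
definition skew_mul_mod ::
  "('r \<Rightarrow> 'm \<Rightarrow> 'm) \<Rightarrow> ('m \<Rightarrow> 'm) \<Rightarrow> 'r list \<Rightarrow> 'm::comm_monoid_add list \<Rightarrow> 'm list" where
  "skew_mul_mod mul \<sigma> r k = map (\<lambda>l. \<Sum>s<length r. \<Sum>j<length k.
       if (s + j) mod length k = l then mul (r ! s) ((\<sigma> ^^ s) (k ! j)) else 0)
     [0..<length k]"

lemma length_skew_mul_mod [simp]: "length (skew_mul_mod mul \<sigma> r k) = length k"
  by (simp add: skew_mul_mod_def)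

lemma nth_skew_mul_mod:
  "l < length k \<Longrightarrow> skew_mul_mod mul \<sigma> r k ! l = (\<Sum>s<length r. \<Sum>j<length k.
       if (s + j) mod length k = l then mul (r ! s) ((\<sigma> ^^ s) (k ! j)) else 0)"
  by (simp add: skew_mul_mod_def)

lemma skew_mul_mod_Nil: "skew_mul_mod mul \<sigma> [] k = replicate (length k) 0"
  by (simp add: skew_mul_mod_def map_replicate_const)

lemma skew_mul_mod_replicate_zero:
  assumes "\<And>a. mul a 0 = 0" and "\<sigma> 0 = 0"
  shows "skew_mul_mod mul \<sigma> r (replicate n 0) = replicate n 0"
proof -
  have "(\<sigma> ^^ s) 0 = 0" for s
    by (induction s) (simp_all add: assms(2))
  then show ?thesis
    by (auto simp: skew_mul_mod_def assms(1) intro!: nth_equalityI sum.neutral)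
qed

lemma skew_mul_mod_append_zeros:
  assumes "\<And>x. mul 0 x = 0"
  shows "skew_mul_mod mul \<sigma> (r @ replicate t 0) k = skew_mul_mod mul \<sigma> r k"
proof (rule nth_equalityI)
  fix l assume "l < length (skew_mul_mod mul \<sigma> (r @ replicate t 0) k)"
  then show "skew_mul_mod mul \<sigma> (r @ replicate t 0) k ! l = skew_mul_mod mul \<sigma> r k ! l"
    by (simp add: nth_skew_mul_mod sum_lessThan_add nth_append assms cong: if_cong)
qed simp

lemma skew_mul_mod_vadd:
  assumes "\<And>a b x. mul (a + b) x = mul a x + mul b x" and "length r1 = length r2"
  shows "skew_mul_mod mul \<sigma> (vadd r1 r2) k
    = vadd (skew_mul_mod mul \<sigma> r1 k) (skew_mul_mod mul \<sigma> r2 k)"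
  using assms(2)
  by (auto simp: skew_mul_mod_def vadd_def assms(1) sum.distrib[symmetric]
      intro!: nth_equalityI sum.cong)

lemma vadd_skew_mul_mod_in_range:
  fixes mul :: "'r::monoid_add \<Rightarrow> 'm::comm_monoid_add \<Rightarrow> 'm"
  assumes "\<And>x. mul 0 x = 0" and "\<And>a b x. mul (a + b) x = mul a x + mul b x"
  shows "vadd (skew_mul_mod mul \<sigma> r1 k) (skew_mul_mod mul \<sigma> r2 k)
    \<in> range (\<lambda>r. skew_mul_mod mul \<sigma> r k)"
proof -
  define n where "n = max (length r1) (length r2)"
  define pad where "pad r = r @ replicate (n - length r) 0" for r :: "'r list"
  have "vadd (skew_mul_mod mul \<sigma> r1 k) (skew_mul_mod mul \<sigma> r2 k)
      = vadd (skew_mul_mod mul \<sigma> (pad r1) k) (skew_mul_mod mul \<sigma> (pad r2) k)"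
    by (simp add: pad_def skew_mul_mod_append_zeros assms(1))
  also have "\<dots> = skew_mul_mod mul \<sigma> (vadd (pad r1) (pad r2)) k"
    by (rule skew_mul_mod_vadd[symmetric]) (auto simp: assms(2) pad_def n_def)
  finally show ?thesis
    by blast
qed

lemma nth_skew_mul_mod_replicate_zero_append:
  assumes "\<And>x. mul 0 x = 0" and "l < length k"
  shows "skew_mul_mod mul \<sigma> (replicate S 0 @ r) k ! l = (\<Sum>s<length r. \<Sum>j<length k.
       if (S + s + j) mod length k = l then mul (r ! s) ((\<sigma> ^^ (S + s)) (k ! j)) else 0)"
  using assms by (simp add: nth_skew_mul_mod sum_lessThan_add nth_append cong: if_cong)

lemma hom_nth_skew_mul_mod:
  assumes "\<phi> 0 = 0" and "\<And>x y. \<phi> (x + y) = \<phi> x + \<phi> y"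
    and "\<And>a y. \<phi> (mul a y) = mul (h a) ((\<sigma> ^^ S) y)" and "l < length k"
  shows "\<phi> (skew_mul_mod mul \<sigma> r k ! l) = (\<Sum>s<length r. \<Sum>j<length k.
       if (s + j) mod length k = l then mul (h (r ! s)) ((\<sigma> ^^ (S + s)) (k ! j)) else 0)"
  by (simp add: assms nth_skew_mul_mod funpow_add if_distrib[of \<phi>]
      flip: sum_comp_morphism[of \<phi>, unfolded comp_def] cong: if_cong)

lemma map_hom_skew_mul_mod:
  assumes "\<phi> 0 = 0" and "\<And>x y. \<phi> (x + y) = \<phi> x + \<phi> y" and "\<And>a y. \<phi> (mul a y) = mul (h a) y"
  shows "map \<phi> (skew_mul_mod mul \<sigma> r k) = skew_mul_mod mul \<sigma> (map h r) k"
proof (rule nth_equalityI)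
  fix l assume "l < length (map \<phi> (skew_mul_mod mul \<sigma> r k))"
  then have l: "l < length k"
    by simp
  have "map \<phi> (skew_mul_mod mul \<sigma> r k) ! l = \<phi> (skew_mul_mod mul \<sigma> r k ! l)"
    using l by simp
  also have "\<dots> = (\<Sum>s<length r. \<Sum>j<length k.
      if (s + j) mod length k = l then mul (h (r ! s)) ((\<sigma> ^^ (0 + s)) (k ! j)) else 0)"
    by (rule hom_nth_skew_mul_mod) (simp_all add: assms l)
  also have "\<dots> = skew_mul_mod mul \<sigma> (map h r) k ! l"
    using l by (simp add: nth_skew_mul_mod cong: if_cong)
  finally show "map \<phi> (skew_mul_mod mul \<sigma> r k) ! l = skew_mul_mod mul \<sigma> (map h r) k ! l" .
qed simp

(* The shift is left multiplication by x^S (S = 1 mod n); h carries phi over to the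
   coefficients of r. *)
lemma map_hom_cshift_skew_mul_mod:
  assumes "\<And>x. mul 0 x = 0" and "\<phi> 0 = 0" and "\<And>x y. \<phi> (x + y) = \<phi> x + \<phi> y"
    and "\<And>a y. \<phi> (mul a y) = mul (h a) ((\<sigma> ^^ S) y)" and "[S = 1] (mod length k)"
  shows "map \<phi> (cshift (skew_mul_mod mul \<sigma> r k)) = skew_mul_mod mul \<sigma> (replicate S 0 @ map h r) k"
proof (rule nth_equalityI)
  fix l assume "l < length (map \<phi> (cshift (skew_mul_mod mul \<sigma> r k)))"
  then have l: "l < length k"
    by simp
  define l' where "l' = (length k - 1 + l) mod length k"
  have "l' < length k"
    using l unfolding l'_def by (intro mod_less_divisor) auto
  have "map \<phi> (cshift (skew_mul_mod mul \<sigma> r k)) ! l = \<phi> (skew_mul_mod mul \<sigma> r k ! l')"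
    using l by (simp add: cshift_nth l'_def)
  also have "\<dots> = (\<Sum>s<length r. \<Sum>j<length k.
      if (s + j) mod length k = l' then mul (h (r ! s)) ((\<sigma> ^^ (S + s)) (k ! j)) else 0)"
    by (rule hom_nth_skew_mul_mod) (use assms \<open>l' < length k\<close> in simp_all)
  also have "\<dots> = (\<Sum>s<length r. \<Sum>j<length k.
      if (S + s + j) mod length k = l then mul (h (r ! s)) ((\<sigma> ^^ (S + s)) (k ! j)) else 0)"
    by (simp only: l'_def mod_eq_pred_iff[OF l assms(5)] add.assoc)
  also have "\<dots> = skew_mul_mod mul \<sigma> (replicate S 0 @ map h r) k ! l"
    using l assms(1) by (simp add: nth_skew_mul_mod_replicate_zero_append cong: if_cong)
  finally show "map \<phi> (cshift (skew_mul_mod mul \<sigma> r k)) ! l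
      = skew_mul_mod mul \<sigma> (replicate S 0 @ map h r) k ! l" .
qed simp

lemma CHAR_eq_of_card_eq_prime_power:
  assumes "prime p" and "card (UNIV :: 'a::{field,finite} set) = p ^ m"
  shows "CHAR('a) = p"
proof -
  have "prime CHAR('a)"
    using prime_CHAR_semidom[where ?'a = 'a] finite_imp_CHAR_pos[where ?'a = 'a] by auto
  moreover have "CHAR('a) dvd p ^ m"
    using CHAR_dvd_CARD[where ?'a = 'a] assms(2) by simp
  ultimately show ?thesis
    using assms(1) by (metis prime_dvd_power primes_dvd_imp_eq)
qed

lemma Theta_zero: "prime p \<Longrightarrow> Theta p i 0 = 0"
  by (simp add: Theta_def prime_gt_0_nat)

lemma Theta_mult: "Theta p i (a * b) = Theta p i a * Theta p i b"
  by (simp add: Theta_def power_mult_distrib)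

lemma Theta_add:
  assumes "CHAR('a::field) = p" and "prime p"
  shows "Theta p i (a + b :: 'a) = Theta p i a + Theta p i b"
  unfolding Theta_def using assms by (intro freshmans_dream') auto

lemma inj_Theta:
  assumes "CHAR('a::field) = p" and "prime p"
  shows "inj (Theta p i :: 'a \<Rightarrow> 'a)"
proof (rule injI)
  fix a b :: 'a
  assume "Theta p i a = Theta p i b"
  then have "Theta p i (a - b) = 0"
    using Theta_add[OF assms, where a = "a - b" and b = b] by simp
  then show "a = b"
    by (simp add: Theta_def)
qed

lemma Theta_funpow_eq_id:
  assumes "CHAR('a::{field,finite}) = p" and "prime p"
  obtains n where "n > 0" and "Theta p i ^^ n = (id :: 'a \<Rightarrow> 'a)"
proof -
  have "bij (Theta p i :: 'a \<Rightarrow> 'a)"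
    using inj_Theta[OF assms] by (simp add: bij_def finite_UNIV_inj_surj)
  then have "permutation (Theta p i :: 'a \<Rightarrow> 'a)"
    by (simp add: permutation)
  then show ?thesis
    using permutation_is_nilpotent that by blast
qed

lemma Theta_funpow_Theta_ord:
  assumes "CHAR('a::{field,finite}) = p" and "prime p"
  shows "Theta p i ^^ Theta_ord TYPE('a) p i = (id :: 'a \<Rightarrow> 'a)"
proof -
  obtain n where "n > 0" and "Theta p i ^^ n = (id :: 'a \<Rightarrow> 'a)"
    using Theta_funpow_eq_id[OF assms] .
  then have "\<exists>n > 0. \<forall>a::'a. (Theta p i ^^ n) a = a"
    by auto
  from LeastI_ex[OF this] show ?thesis
    by (auto simp: Theta_ord_def)
qed

lemma Theta_funpow_eq_id_cong_one:
  assumes "CHAR('a::{field,finite}) = p" and "prime p" and "gcd n (Theta_ord TYPE('a) p i) = 1"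
  obtains S where "Theta p i ^^ S = (id :: 'a \<Rightarrow> 'a)" and "[S = 1] (mod n)"
proof -
  let ?T = "Theta_ord TYPE('a) p i"
  have "coprime ?T n"
    using assms(3) by (simp add: coprime_iff_gcd_eq_1 gcd.commute)
  then obtain x where "[?T * x = 1] (mod n)"
    using cong_solve_coprime_nat by auto
  moreover have "Theta p i ^^ (?T * x) = (id :: 'a \<Rightarrow> 'a)"
    by (simp add: Theta_funpow_Theta_ord[OF assms(1,2)] flip: funpow_mult)
  ultimately show ?thesis
    using that by blast
qed

lemma Rmul_zero_left [simp]: "Rmul 0 x = 0" and Rmul_zero_right [simp]: "Rmul x 0 = 0"
  by (simp_all add: Rmul_def zero_prod_def)

lemma Rmul_add_left: "Rmul (a + b) x = Rmul a x + Rmul b x"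
  by (simp add: Rmul_def algebra_simps)

lemma Rmul_add_right: "Rmul x (a + b) = Rmul x a + Rmul x b"
  by (simp add: Rmul_def algebra_simps)

lemma Rmul_assoc: "Rmul (Rmul a b) c = Rmul a (Rmul b c)"
  by (simp add: Rmul_def algebra_simps)

lemma thetaR_zero: "prime p \<Longrightarrow> thetaR p i 0 = 0"
  by (simp add: thetaR_def Theta_zero zero_prod_def)

lemma thetaR_add:
  assumes "CHAR('a::field) = p" and "prime p"
  shows "thetaR p i (a + b :: 'a \<times> 'a) = thetaR p i a + thetaR p i b"
  using assms by (simp add: thetaR_def Theta_add)

lemma thetaR_Rmul:
  assumes "CHAR('a::field) = p" and "prime p"
  shows "thetaR p i (Rmul a b :: 'a \<times> 'a) = Rmul (thetaR p i a) (thetaR p i b)"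
  using assms by (simp add: thetaR_def Rmul_def Theta_add Theta_mult)

lemma act1_eq_skew_mul_mod: "act1 p i = skew_mul_mod (\<lambda>a b. eta a * b) (Theta p i)"
  by (simp add: fun_eq_iff act1_def skew_mul_mod_def)

lemma act2_eq_skew_mul_mod: "act2 p i = skew_mul_mod Rmul (thetaR p i)"
  by (simp add: fun_eq_iff act2_def skew_mul_mod_def)

lemma cyclic_code_range_act1:
  assumes "Theta p i ^^ S = (id :: 'a::field \<Rightarrow> 'a)" and "[S = 1] (mod length f)"
  shows "cyclic_code (length f) (range (\<lambda>r. act1 p i r (f :: 'a list)))"
  unfolding cyclic_code_def act1_eq_skew_mul_mod
proof (intro conjI ballI allI)
  let ?mul = "\<lambda>a b. eta a * b"
  let ?C = "range (\<lambda>r. skew_mul_mod ?mul (Theta p i) r f)"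
  have mul_zero: "eta (0 :: 'a \<times> 'a) * x = 0" for x
    by (simp add: eta_def)
  have mul_add: "eta (a + b) * x = eta a * x + eta b * x" for a b :: "'a \<times> 'a" and x
    by (simp add: eta_def distrib_right)
  show "?C \<subseteq> {xs. length xs = length f}"
    by auto
  show "replicate (length f) 0 \<in> ?C"
    by (metis rangeI skew_mul_mod_Nil)
  show "vadd x y \<in> ?C" if "x \<in> ?C" and "y \<in> ?C" for x y
    using that by (blast intro: vadd_skew_mul_mod_in_range[where mul = ?mul, OF mul_zero mul_add])
  show "map (\<lambda>a. c * a) x \<in> ?C" if "x \<in> ?C" for c x
  proof -
    from that obtain r where x: "x = skew_mul_mod ?mul (Theta p i) r f"
      by blast
    have "map (\<lambda>a. c * a) x = skew_mul_mod ?mul (Theta p i) (map (\<lambda>a. (c * fst a, snd a)) r) f"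
      unfolding x by (rule map_hom_skew_mul_mod) (simp_all add: eta_def algebra_simps)
    then show ?thesis
      by simp
  qed
  show "cshift x \<in> ?C" if "x \<in> ?C" for x
  proof -
    from that obtain r where x: "x = skew_mul_mod ?mul (Theta p i) r f"
      by blast
    have "map id (cshift x) = skew_mul_mod ?mul (Theta p i) (replicate S 0 @ map id r) f"
      unfolding x
      by (rule map_hom_cshift_skew_mul_mod[OF _ _ _ _ assms(2)]) (simp_all add: mul_zero assms(1))
    then show ?thesis
      by simp
  qed
qed

lemma skew_cyclic_code_range_act2:
  assumes "CHAR('a::field) = p" and "prime p"
  shows "skew_cyclic_code_R p i (length g) (range (\<lambda>r. act2 p i r (g :: ('a \<times> 'a) list)))"
  unfolding skew_cyclic_code_R_def act2_eq_skew_mul_mod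
proof (intro conjI ballI allI)
  let ?C = "range (\<lambda>r. skew_mul_mod Rmul (thetaR p i) r g)"
  show "?C \<subseteq> {xs. length xs = length g}"
    by auto
  show "replicate (length g) 0 \<in> ?C"
    by (metis rangeI skew_mul_mod_Nil)
  show "vadd x y \<in> ?C" if "x \<in> ?C" and "y \<in> ?C" for x y
    using that
    by (blast intro: vadd_skew_mul_mod_in_range[where mul = Rmul, OF Rmul_zero_left Rmul_add_left])
  show "map (Rmul c) x \<in> ?C" if "x \<in> ?C" for c x
  proof -
    from that obtain r where x: "x = skew_mul_mod Rmul (thetaR p i) r g"
      by blast
    have "map (Rmul c) x = skew_mul_mod Rmul (thetaR p i) (map (Rmul c) r) g"
      unfolding x by (rule map_hom_skew_mul_mod) (simp_all add: Rmul_add_right Rmul_assoc)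
    then show ?thesis
      by simp
  qed
  show "map (thetaR p i) (cshift x) \<in> ?C" if "x \<in> ?C" for x
  proof -
    from that obtain r where x: "x = skew_mul_mod Rmul (thetaR p i) r g"
      by blast
    have "map (thetaR p i) (cshift x)
        = skew_mul_mod Rmul (thetaR p i) (replicate 1 0 @ map (thetaR p i) r) g"
      unfolding x
      by (rule map_hom_cshift_skew_mul_mod) (simp_all add: assms thetaR_zero thetaR_add thetaR_Rmul)
    then show ?thesis
      by simp
  qed
qed

lemma gen_code_eq_Times:
  assumes "prime p" and "length f = \<alpha>" and "length g = \<beta>"
  shows "gen_code p i \<alpha> \<beta> f g = range (\<lambda>r. act1 p i r f) \<times> range (\<lambda>r. act2 p i r g)"
proof -
  have "gen_code p i \<alpha> \<beta> f g = {(act1 p i r1 f, act2 p i r2 g) | r1 r2. True}"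
    using assms
    by (simp add: gen_code_def padd_def mod_act_def act1_eq_skew_mul_mod act2_eq_skew_mul_mod
        skew_mul_mod_replicate_zero Theta_zero thetaR_zero
        vadd_replicate_zero_left vadd_replicate_zero_right)
  then show ?thesis
    by auto
qed

theorem corollary1:
  fixes f :: "'a::{field,finite} list" and g :: "('a \<times> 'a) list"
    and p m i \<alpha> \<beta> :: nat
  assumes "prime p" and "card (UNIV :: 'a set) = p ^ m"
    and "gcd \<alpha> (Theta_ord TYPE('a) p i) = 1"
    and "length f = \<alpha>" and "length g = \<beta>"
  shows "\<exists>C1 C2. cyclic_code \<alpha> C1 \<and> skew_cyclic_code_R p i \<beta> C2 \<and>
           gen_code p i \<alpha> \<beta> f g = C1 \<times> C2"
proof -
  have char: "CHAR('a) = p"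
    using assms(1,2) by (rule CHAR_eq_of_card_eq_prime_power)
  obtain S where "Theta p i ^^ S = (id :: 'a \<Rightarrow> 'a)" and "[S = 1] (mod \<alpha>)"
    using Theta_funpow_eq_id_cong_one[OF char assms(1,3)] .
  then have "cyclic_code \<alpha> (range (\<lambda>r. act1 p i r f))"
    using cyclic_code_range_act1 assms(4) by blast
  moreover have "skew_cyclic_code_R p i \<beta> (range (\<lambda>r. act2 p i r g))"
    using skew_cyclic_code_range_act2[OF char assms(1)] assms(5) by blast
  ultimately show ?thesis
    using gen_code_eq_Times[OF assms(1,4,5)] by blast
qed

end
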